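(* There is an absolute constant $\epsilon_0>0$ such that the following holds. Let $n\ge 2$, $\mathcal F\subseteq S_n$, $f=2\chi_{\mathcal F}-1$, $f_1$ its projection onto $U_1$, $\epsilon=\mathbb E[(f-f_1)^2]$ with $0<\epsilon<\epsilon_0$, and let $(X,Y)$ be a typical restriction. Choose $\alpha,\beta$ independently and uniformly from $T_{X,Y}$, and write $\alpha_1,\beta_1$ for their restrictions to $X$ and $\alpha_2,\beta_2$ for their restrictions to $[n]\setminus X$. Then with probability at least $1-8\epsilon^{2/7}$ one of the following holds: (a) $|g_1(\alpha_1)-g_1(\beta_1)|\le 2\epsilon^{1/7}$ and $|g_2(\alpha_2)-g_2(\beta_2)|\le2\epsilon^{1/7}$; (b) $|g_1(\alpha_1)-g_1(\beta_1)|\le 2\epsilon^{1/7}$ and $|g_2(\alpha_2)-g_2(\beta_2)|\in[2-2\epsilon^{1/7},2+2\epsilon^{1/7}]$; (c) $|g_1(\alpha_1)-g_1(\beta_1)|\in[2-2\epsilon^{1/7},2+2\epsilon^{1/7}]$ and $|g_2(\alpha_2)-g_2(\beta_2)|\le2\epsilon^{1/7}$.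
   Context: $S_n$ is the symmetric group on $[n]$; $T_{ij}$ is the indicator of $\{\pi:\pi(i)=j\}$; $U_1=\mathrm{span}\{T_{ij}\}$ with inner product $\langle f,g\rangle=\frac1{n!}\sum_\pi f(\pi)g(\pi)$. With $|\mathcal F|=c\,n!$, let $a_{ij}=(n-1)\langle f,T_{ij}\rangle-\frac{n-2}{n}(2c-1)$. A restriction is $(X,Y)$ with $X,Y\subseteq[n]$, $|X|=|Y|$; $T_{X,Y}=\{\pi:\pi(X)=Y\}$ with uniform measure. For $\pi\in T_{X,Y}$, $g_1(\pi)=\sum_{i\in X}a_{i\pi(i)}$ (depending only on $\pi|_X$), $g_2(\pi)=\sum_{i\notin X}a_{i\pi(i)}$ (depending only on $\pi|_{[n]\setminus X}$), $g=g_1+g_2$. A function $\phi$ is $(\delta,\epsilon)$-almost Boolean if $\Pr[||\phi|-1|\le\epsilon]\ge1-\delta$. A restriction is typical if: (a) $g$ is $(\epsilon^{4/7},\epsilon^{1/7})$-almost Boolean on $T_{X,Y}$; (b) $\mathbb E[g_1],\mathbb E[g_2]$ are within $\epsilon^{1/7}$ of $c-\frac12$; (c) $\mathbb E[(|g|-1)^2]\le\epsilon^{6/7}$. *)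

theory Defs
  imports Complex_Main "HOL-Combinatorics.Permutations"
begin

type_synonym perm_fun = "(nat \<Rightarrow> nat) \<Rightarrow> real"

text \<open>S_n: permutations of [n], represented as permutations of {0..<n}.\<close>
definition Sn :: "nat \<Rightarrow> (nat \<Rightarrow> nat) set" where
  "Sn n = {\<pi>. \<pi> permutes {..<n}}"

definition Tind :: "nat \<Rightarrow> nat \<Rightarrow> perm_fun" where
  "Tind i j \<pi> = (if \<pi> i = j then 1 else 0)"

definition ip :: "nat \<Rightarrow> perm_fun \<Rightarrow> perm_fun \<Rightarrow> real" where
  "ip n f g = (\<Sum>\<pi>\<in>Sn n. f \<pi> * g \<pi>) / fact n"

definition U1 :: "nat \<Rightarrow> perm_fun set" where
  "U1 n = {h. \<exists>c. \<forall>\<pi>\<in>Sn n. h \<pi> = (\<Sum>i<n. \<Sum>j<n. c i j * Tind i j \<pi>)}"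

text \<open>Orthogonal projection onto U_1 (unique on S_n).\<close>
definition proj_U1 :: "nat \<Rightarrow> perm_fun \<Rightarrow> perm_fun" where
  "proj_U1 n f = (SOME h. h \<in> U1 n \<and>
      (\<forall>i<n. \<forall>j<n. ip n (\<lambda>\<pi>. f \<pi> - h \<pi>) (Tind i j) = 0))"

definition fF :: "(nat \<Rightarrow> nat) set \<Rightarrow> perm_fun" where
  "fF F \<pi> = 2 * (if \<pi> \<in> F then 1 else 0) - 1"

definition epsF :: "nat \<Rightarrow> (nat \<Rightarrow> nat) set \<Rightarrow> real" where
  "epsF n F = (\<Sum>\<pi>\<in>Sn n. (fF F \<pi> - proj_U1 n (fF F) \<pi>)^2) / fact n"

definition cF :: "nat \<Rightarrow> (nat \<Rightarrow> nat) set \<Rightarrow> real" where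
  "cF n F = real (card F) / fact n"

definition acoef :: "nat \<Rightarrow> (nat \<Rightarrow> nat) set \<Rightarrow> nat \<Rightarrow> nat \<Rightarrow> real" where
  "acoef n F i j = (real n - 1) * ip n (fF F) (Tind i j)
                   - (real n - 2) / real n * (2 * cF n F - 1)"

definition TXY :: "nat \<Rightarrow> nat set \<Rightarrow> nat set \<Rightarrow> (nat \<Rightarrow> nat) set" where
  "TXY n X Y = {\<pi> \<in> Sn n. \<pi> ` X = Y}"

definition g1 :: "nat \<Rightarrow> (nat \<Rightarrow> nat) set \<Rightarrow> nat set \<Rightarrow> perm_fun" where
  "g1 n F X \<pi> = (\<Sum>i\<in>X. acoef n F i (\<pi> i))"

definition g2 :: "nat \<Rightarrow> (nat \<Rightarrow> nat) set \<Rightarrow> nat set \<Rightarrow> perm_fun" where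
  "g2 n F X \<pi> = (\<Sum>i\<in>{..<n} - X. acoef n F i (\<pi> i))"

definition gfun :: "nat \<Rightarrow> (nat \<Rightarrow> nat) set \<Rightarrow> nat set \<Rightarrow> perm_fun" where
  "gfun n F X \<pi> = g1 n F X \<pi> + g2 n F X \<pi>"

definition avg :: "'a set \<Rightarrow> ('a \<Rightarrow> real) \<Rightarrow> real" where
  "avg A \<phi> = (\<Sum>x\<in>A. \<phi> x) / real (card A)"

definition uprob :: "'a set \<Rightarrow> ('a \<Rightarrow> bool) \<Rightarrow> real" where
  "uprob A P = real (card {x\<in>A. P x}) / real (card A)"

definition almost_boolean :: "'a set \<Rightarrow> ('a \<Rightarrow> real) \<Rightarrow> real \<Rightarrow> real \<Rightarrow> bool" where
  "almost_boolean A \<phi> \<delta> e \<longleftrightarrow> uprob A (\<lambda>x. \<bar>\<bar>\<phi> x\<bar> - 1\<bar> \<le> e) \<ge> 1 - \<delta>"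

definition restriction :: "nat \<Rightarrow> nat set \<Rightarrow> nat set \<Rightarrow> bool" where
  "restriction n X Y \<longleftrightarrow> X \<subseteq> {..<n} \<and> Y \<subseteq> {..<n} \<and> card X = card Y"

definition typical :: "nat \<Rightarrow> (nat \<Rightarrow> nat) set \<Rightarrow> nat set \<Rightarrow> nat set \<Rightarrow> bool" where
  "typical n F X Y \<longleftrightarrow>
     (let \<epsilon> = epsF n F; T = TXY n X Y; c = cF n F in
       restriction n X Y \<and>
       almost_boolean T (gfun n F X) (\<epsilon> powr (4/7)) (\<epsilon> powr (1/7)) \<and>
       \<bar>avg T (g1 n F X) - (c - 1/2)\<bar> \<le> \<epsilon> powr (1/7) \<and>
       \<bar>avg T (g2 n F X) - (c - 1/2)\<bar> \<le> \<epsilon> powr (1/7) \<and>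
       avg T (\<lambda>\<pi>. (\<bar>gfun n F X \<pi>\<bar> - 1)^2) \<le> \<epsilon> powr (6/7))"

end

theory Submission
  imports Defs
begin

(*
  For a permutation of T = T_{X,Y} write g = g1 + g2, where g1 only sees the
  values on X and g2 only those off X.  Given a pair (alpha, beta) in T x T, the two
  "exchanged" permutations  mix X alpha beta  and  mix X beta alpha  (take alpha on X and beta
  off X, resp. the other way round) again lie in T, and their g-values are g1 alpha + g2 beta
  and g1 beta + g2 alpha.  If all four numbers g1 a + g2 b (a, b in {alpha, beta}) are within
  h = eps^(1/7) of +-1, an elementary case analysis on signs gives one of the alternatives
  (a)-(c).  Since g is (eps^(4/7), h)-almost Boolean, each of the four events "the i-th of these
  permutations is bad" has probability at most eps^(4/7) (the exchange map is a bijection of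
  T x T), so the union bound yields probability at least 1 - 4 eps^(4/7) >= 1 - 8 eps^(2/7).
*)

lemma four_point_dichotomy:
  fixes a b c e h :: real
  assumes "0 \<le> h" "h < 1/4"
    and "\<bar>\<bar>a + c\<bar> - 1\<bar> \<le> h" "\<bar>\<bar>b + c\<bar> - 1\<bar> \<le> h"
    and "\<bar>\<bar>a + e\<bar> - 1\<bar> \<le> h" "\<bar>\<bar>b + e\<bar> - 1\<bar> \<le> h"
  shows "(\<bar>a - b\<bar> \<le> 2*h \<and> \<bar>c - e\<bar> \<le> 2*h) \<or>
         (\<bar>a - b\<bar> \<le> 2*h \<and> 2 - 2*h \<le> \<bar>c - e\<bar> \<and> \<bar>c - e\<bar> \<le> 2 + 2*h) \<or>
         (2 - 2*h \<le> \<bar>a - b\<bar> \<and> \<bar>a - b\<bar> \<le> 2 + 2*h \<and> \<bar>c - e\<bar> \<le> 2*h)"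
proof -
  have near_sign: "\<bar>x - 1\<bar> \<le> h \<or> \<bar>x + 1\<bar> \<le> h" if "\<bar>\<bar>x\<bar> - 1\<bar> \<le> h" for x :: real
    using that by (cases "x \<ge> 0") auto
  text \<open>Each of the four sums is near +1 or near -1; since h < 1/4 the sign pattern is forced
    to be consistent, and the claim is linear arithmetic in each of the 16 cases.\<close>
  show ?thesis
    using near_sign[OF assms(3)] near_sign[OF assms(4)] near_sign[OF assms(5)]
      near_sign[OF assms(6)] assms(1,2)
    by (smt (verit))
qed

lemma uprob_complement:
  assumes "finite A" "A \<noteq> {}"
  shows "uprob A P = 1 - real (card {x\<in>A. \<not> P x}) / real (card A)"
proof -
  have "card {x\<in>A. P x} + card {x\<in>A. \<not> P x} = card A"
    using assms(1) by (subst card_Un_disjoint[symmetric]) (auto intro: arg_cong[where f = card])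
  moreover have "card A > 0" using assms by (simp add: card_gt_0_iff)
  ultimately show ?thesis
    unfolding uprob_def by (simp add: field_simps flip: of_nat_add)
qed

lemma uprob_ge_iff:
  assumes "finite A" "A \<noteq> {}"
  shows "1 - q \<le> uprob A P \<longleftrightarrow> real (card {x\<in>A. \<not> P x}) \<le> q * real (card A)"
proof -
  have "card A > 0" using assms by (simp add: card_gt_0_iff)
  then show ?thesis
    unfolding uprob_complement[OF assms] by (simp add: divide_le_eq)
qed

text \<open>A positive lower bound on a probability forces a nonempty sample space (the
  probability on the empty set is 0 by the convention x / 0 = 0).\<close>
lemma uprob_pos_nonempty:
  assumes "1 - \<delta> \<le> uprob A P" "\<delta> < 1"
  shows "A \<noteq> {}"
  using assms by (auto simp: uprob_def)

lemma uprob_mono: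
  assumes "\<And>x. x \<in> A \<Longrightarrow> P x \<Longrightarrow> Q x"
  shows "uprob A P \<le> uprob A Q"
proof (cases "finite A")
  case True
  then have "card {x\<in>A. P x} \<le> card {x\<in>A. Q x}"
    using assms by (intro card_mono) auto
  then show ?thesis unfolding uprob_def by (simp add: divide_right_mono)
qed (simp add: uprob_def)

lemma card_preimage_le:
  assumes "inj_on \<sigma> A" "\<sigma> ` A \<subseteq> A" "finite S"
  shows "card {p\<in>A. \<sigma> p \<in> S} \<le> card S"
  using assms by (intro card_inj_on_le[of \<sigma>]) (auto intro: inj_on_subset)

text \<open>The pairs p
  for which one of the four coordinates of p and \<sigma> p fails Q are at most
  4 |{x \<in> T. \<not> Q x}| |T| many: each of the four failures is a product set of that size,
  or the preimage of one under \<sigma>.\<close>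
lemma card_bad_pairs_le:
  assumes "finite T" "inj_on \<sigma> (T \<times> T)" "\<sigma> ` (T \<times> T) \<subseteq> T \<times> T"
  shows "card {p\<in>T \<times> T. \<not> (Q (fst p) \<and> Q (snd p) \<and> Q (fst (\<sigma> p)) \<and> Q (snd (\<sigma> p)))}
           \<le> 4 * (card {x\<in>T. \<not> Q x} * card T)"
proof -
  define N where "N = {x\<in>T. \<not> Q x}"
  define A1 where "A1 = N \<times> T"
  define A2 where "A2 = T \<times> N"
  define A3 where "A3 = {p\<in>T \<times> T. \<sigma> p \<in> A1}"
  define A4 where "A4 = {p\<in>T \<times> T. \<sigma> p \<in> A2}"
  have fin: "finite A1" "finite A2" "finite A3" "finite A4"
    using assms(1) by (auto simp: N_def A1_def A2_def A3_def A4_def)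
  have "{p\<in>T \<times> T. \<not> (Q (fst p) \<and> Q (snd p) \<and> Q (fst (\<sigma> p)) \<and> Q (snd (\<sigma> p)))}
          \<subseteq> A1 \<union> A2 \<union> A3 \<union> A4"
    using assms(3) by (fastforce simp: N_def A1_def A2_def A3_def A4_def)
  then have "card {p\<in>T \<times> T. \<not> (Q (fst p) \<and> Q (snd p) \<and> Q (fst (\<sigma> p)) \<and> Q (snd (\<sigma> p)))}
      \<le> card (A1 \<union> A2 \<union> A3 \<union> A4)"
    using fin by (intro card_mono) auto
  also have "\<dots> \<le> card A1 + card A2 + card A3 + card A4"
    using card_Un_le[of "A1 \<union> A2 \<union> A3" A4] card_Un_le[of "A1 \<union> A2" A3] card_Un_le[of A1 A2]
    by linarith
  also have "\<dots> \<le> 4 * (card N * card T)"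
    using card_preimage_le[OF assms(2,3) fin(1)] card_preimage_le[OF assms(2,3) fin(2)]
    by (simp add: A1_def A2_def A3_def A4_def card_cartesian_product mult.commute)
  finally show ?thesis by (simp add: N_def)
qed

definition mix :: "nat set \<Rightarrow> (nat \<Rightarrow> nat) \<Rightarrow> (nat \<Rightarrow> nat) \<Rightarrow> nat \<Rightarrow> nat" where
  "mix X a b = (\<lambda>i. if i \<in> X then a i else b i)"

definition exchange :: "nat set \<Rightarrow> (nat \<Rightarrow> nat) \<times> (nat \<Rightarrow> nat) \<Rightarrow> (nat \<Rightarrow> nat) \<times> (nat \<Rightarrow> nat)"
  where "exchange X p = (mix X (fst p) (snd p), mix X (snd p) (fst p))"

lemma exchange_exchange: "exchange X (exchange X p) = p"
  by (cases p) (simp add: exchange_def mix_def fun_eq_iff)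

lemma g1_mix: "g1 n F X (mix X a b) = g1 n F X a"
  by (simp add: g1_def mix_def)

lemma g2_mix: "g2 n F X (mix X a b) = g2 n F X b"
  by (simp add: g2_def mix_def)

text \<open>Gluing the X-part of one element of T_{X,Y} with the complementary part of another
  gives again an element of T_{X,Y}: both map X onto Y and [n] - X onto [n] - Y.\<close>
lemma mix_in_TXY:
  assumes r: "restriction n X Y" and a: "a \<in> TXY n X Y" and b: "b \<in> TXY n X Y"
  shows "mix X a b \<in> TXY n X Y"
proof -
  let ?U = "{..<n}"
  have X: "X \<subseteq> ?U" and Y: "Y \<subseteq> ?U" using r by (auto simp: restriction_def)
  have ap: "a permutes ?U" and aX: "a ` X = Y" using a by (auto simp: TXY_def Sn_def)
  have bp: "b permutes ?U" and bX: "b ` X = Y" using b by (auto simp: TXY_def Sn_def)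
  have a_on_X: "bij_betw a X Y"
    using aX permutes_inj_on[OF ap] by (simp add: bij_betw_def inj_on_subset)
  have inj_b: "inj b" using permutes_inj[OF bp] .
  have "bij_betw b (?U - X) (b ` (?U - X))"
    using inj_b by (simp add: inj_on_imp_bij_betw inj_on_subset)
  then have b_off_X: "bij_betw b (?U - X) (?U - Y)"
    using image_set_diff[OF inj_b] bX permutes_image[OF bp] by simp
  have "bij_betw (mix X a b) X Y"
    using a_on_X by (rule bij_betw_cong[THEN iffD1, rotated]) (auto simp: mix_def)
  moreover have "bij_betw (mix X a b) (?U - X) (?U - Y)"
    using b_off_X by (rule bij_betw_cong[THEN iffD1, rotated]) (auto simp: mix_def)
  ultimately have "bij_betw (mix X a b) (X \<union> (?U - X)) (Y \<union> (?U - Y))"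
    by (rule bij_betw_combine) auto
  then have "bij_betw (mix X a b) ?U ?U"
    using X Y by (simp add: Un_absorb1 Un_Diff_cancel)
  moreover have "\<forall>x. x \<notin> ?U \<longrightarrow> mix X a b x = x"
    using X permutes_not_in[OF bp] by (auto simp: mix_def)
  ultimately have "mix X a b permutes ?U" by (intro bij_imp_permutes) auto
  moreover have "mix X a b ` X = Y" using aX by (auto simp: mix_def)
  ultimately show ?thesis by (simp add: TXY_def Sn_def)
qed

lemma finite_TXY: "finite (TXY n X Y)"
proof (rule finite_subset)
  show "TXY n X Y \<subseteq> Sn n" by (auto simp: TXY_def)
  show "finite (Sn n)" unfolding Sn_def by (rule finite_permutations) simp
qed

lemma exchange_self_map:
  assumes "restriction n X Y"
  shows "exchange X ` (TXY n X Y \<times> TXY n X Y) \<subseteq> TXY n X Y \<times> TXY n X Y"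
  using mix_in_TXY[OF assms] by (auto simp: exchange_def)

lemma inj_on_exchange: "inj_on (exchange X) A"
  by (metis exchange_exchange inj_on_inverseI)

text \<open>For eps < (1/4)^7 the tolerance eps^(1/7) is below 1/4, as the dichotomy requires.\<close>
lemma root7_small:
  fixes \<epsilon> :: real
  assumes "0 < \<epsilon>" "\<epsilon> < (1/4) powr 7"
  shows "\<epsilon> powr (1/7) < 1/4"
proof -
  have "\<epsilon> powr (1/7) < ((1/4) powr 7) powr (1/7)"
    using assms by (intro powr_less_mono2) auto
  also have "\<dots> = 1/4" by (subst powr_powr) simp
  finally show ?thesis .
qed

lemma four_union_bound:
  fixes \<epsilon> :: real
  assumes "0 < \<epsilon>" "\<epsilon> < 1"
  shows "4 * \<epsilon> powr (4/7) \<le> 8 * \<epsilon> powr (2/7)"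
proof -
  have "\<epsilon> powr (2/7) \<le> 1" using assms by (intro powr_le1) auto
  then have "\<epsilon> powr (2/7) * \<epsilon> powr (2/7) \<le> \<epsilon> powr (2/7)"
    by (intro mult_left_le) auto
  moreover have "\<epsilon> powr (4/7) = \<epsilon> powr (2/7) * \<epsilon> powr (2/7)"
    by (simp add: powr_add[symmetric])
  ultimately show ?thesis using powr_ge_zero[of \<epsilon> "2/7"] by linarith
qed

lemma pair_dichotomy_prob:
  assumes r: "restriction n X Y" and ab: "almost_boolean (TXY n X Y) (gfun n F X) \<delta> h"
    and "\<delta> < 1" "0 \<le> h" "h < 1/4"
  defines "T \<equiv> TXY n X Y"
  shows "1 - 4 * \<delta> \<le> uprob (T \<times> T) (\<lambda>(\<alpha>, \<beta>).
           let d1 = \<bar>g1 n F X \<alpha> - g1 n F X \<beta>\<bar>; d2 = \<bar>g2 n F X \<alpha> - g2 n F X \<beta>\<bar> in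
           (d1 \<le> 2*h \<and> d2 \<le> 2*h) \<or>
           (d1 \<le> 2*h \<and> 2 - 2*h \<le> d2 \<and> d2 \<le> 2 + 2*h) \<or>
           (2 - 2*h \<le> d1 \<and> d1 \<le> 2 + 2*h \<and> d2 \<le> 2*h))"
    (is "_ \<le> uprob _ ?P")
proof -
  define Q where "Q = (\<lambda>\<pi>. \<bar>\<bar>gfun n F X \<pi>\<bar> - 1\<bar> \<le> h)"
  define \<sigma> where "\<sigma> = exchange X"
  have finT: "finite T" using finite_TXY by (simp add: T_def)
  have T: "T \<noteq> {}"
    using uprob_pos_nonempty ab \<open>\<delta> < 1\<close> by (simp add: T_def almost_boolean_def)
  define Q4 where "Q4 = (\<lambda>p. Q (fst p) \<and> Q (snd p) \<and> Q (fst (\<sigma> p)) \<and> Q (snd (\<sigma> p)))"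
  have bad_points: "real (card {x\<in>T. \<not> Q x}) \<le> \<delta> * real (card T)"
    using ab uprob_ge_iff[OF finT T] by (simp add: almost_boolean_def Q_def T_def)
  have "card {p\<in>T \<times> T. \<not> Q4 p} \<le> 4 * (card {x\<in>T. \<not> Q x} * card T)"
    unfolding Q4_def \<sigma>_def
    by (rule card_bad_pairs_le[OF finT inj_on_exchange exchange_self_map[OF r, folded T_def]])
  then have "real (card {p\<in>T \<times> T. \<not> Q4 p}) \<le> real (4 * (card {x\<in>T. \<not> Q x} * card T))"
    by (simp only: of_nat_le_iff)
  also have "\<dots> \<le> 4 * \<delta> * real (card (T \<times> T))"
    using mult_right_mono[OF bad_points, of "real (card T)"]
    by (simp add: card_cartesian_product mult.assoc)
  finally have "1 - 4 * \<delta> \<le> uprob (T \<times> T) Q4"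
    using finT T by (subst uprob_ge_iff) auto
  also have "\<dots> \<le> uprob (T \<times> T) ?P"
  proof (rule uprob_mono)
    fix p assume "Q4 p"
    obtain \<alpha> \<beta> where p: "p = (\<alpha>, \<beta>)" by fastforce
    have "\<bar>\<bar>g1 n F X \<alpha> + g2 n F X \<alpha>\<bar> - 1\<bar> \<le> h" "\<bar>\<bar>g1 n F X \<beta> + g2 n F X \<alpha>\<bar> - 1\<bar> \<le> h"
      "\<bar>\<bar>g1 n F X \<alpha> + g2 n F X \<beta>\<bar> - 1\<bar> \<le> h" "\<bar>\<bar>g1 n F X \<beta> + g2 n F X \<beta>\<bar> - 1\<bar> \<le> h"
      using \<open>Q4 p\<close> by (simp_all add: Q4_def Q_def p \<sigma>_def exchange_def gfun_def g1_mix g2_mix)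
    from four_point_dichotomy[OF \<open>0 \<le> h\<close> \<open>h < 1/4\<close> this]
    show "?P p" by (simp add: p)
  qed
  finally show ?thesis .
qed

theorem lemma2p6:
  shows "\<exists>\<epsilon>0>0. \<forall>n::nat. \<forall>F X Y.
     n \<ge> 2 \<longrightarrow> F \<subseteq> Sn n \<longrightarrow>
     0 < epsF n F \<longrightarrow> epsF n F < \<epsilon>0 \<longrightarrow> typical n F X Y \<longrightarrow>
     (let \<epsilon> = epsF n F; T = TXY n X Y; d = 2 * \<epsilon> powr (1/7) in
       uprob (T \<times> T) (\<lambda>(\<alpha>, \<beta>).
          let d1 = \<bar>g1 n F X \<alpha> - g1 n F X \<beta>\<bar>; d2 = \<bar>g2 n F X \<alpha> - g2 n F X \<beta>\<bar> in
          (d1 \<le> d \<and> d2 \<le> d) \<or>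
          (d1 \<le> d \<and> 2 - d \<le> d2 \<and> d2 \<le> 2 + d) \<or>
          (2 - d \<le> d1 \<and> d1 \<le> 2 + d \<and> d2 \<le> d))
       \<ge> 1 - 8 * \<epsilon> powr (2/7))"
proof (intro exI[of _ "(1/4) powr 7"] conjI allI impI)
  show "(0::real) < (1/4) powr 7" by simp
  fix n :: nat and F X Y
  assume pos: "0 < epsF n F" and small: "epsF n F < (1/4) powr 7" and ty: "typical n F X Y"
  define \<epsilon> where "\<epsilon> = epsF n F"
  have "(1/4::real) powr 7 < 1" by (simp add: power_less_one_iff)
  then have \<epsilon>1: "\<epsilon> < 1" using small by (simp add: \<epsilon>_def)
  have "\<epsilon> powr (4/7) < 1"
    using pos \<epsilon>1 powr_less_mono2[of "4/7" \<epsilon> 1] by (simp add: \<epsilon>_def)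
  moreover have "restriction n X Y"
    and "almost_boolean (TXY n X Y) (gfun n F X) (\<epsilon> powr (4/7)) (\<epsilon> powr (1/7))"
    using ty by (simp_all add: typical_def Let_def \<epsilon>_def)
  ultimately have "1 - 4 * \<epsilon> powr (4/7) \<le> uprob (TXY n X Y \<times> TXY n X Y) (\<lambda>(\<alpha>, \<beta>).
          let d1 = \<bar>g1 n F X \<alpha> - g1 n F X \<beta>\<bar>; d2 = \<bar>g2 n F X \<alpha> - g2 n F X \<beta>\<bar> in
          (d1 \<le> 2 * \<epsilon> powr (1/7) \<and> d2 \<le> 2 * \<epsilon> powr (1/7)) \<or>
          (d1 \<le> 2 * \<epsilon> powr (1/7) \<and> 2 - 2 * \<epsilon> powr (1/7) \<le> d2 \<and> d2 \<le> 2 + 2 * \<epsilon> powr (1/7)) \<or>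
          (2 - 2 * \<epsilon> powr (1/7) \<le> d1 \<and> d1 \<le> 2 + 2 * \<epsilon> powr (1/7) \<and> d2 \<le> 2 * \<epsilon> powr (1/7)))"
    using root7_small[OF pos small] by (intro pair_dichotomy_prob) (simp_all add: \<epsilon>_def)
  then show "let \<epsilon> = epsF n F; T = TXY n X Y; d = 2 * \<epsilon> powr (1/7) in
       uprob (T \<times> T) (\<lambda>(\<alpha>, \<beta>).
          let d1 = \<bar>g1 n F X \<alpha> - g1 n F X \<beta>\<bar>; d2 = \<bar>g2 n F X \<alpha> - g2 n F X \<beta>\<bar> in
          (d1 \<le> d \<and> d2 \<le> d) \<or>
          (d1 \<le> d \<and> 2 - d \<le> d2 \<and> d2 \<le> 2 + d) \<or>
          (2 - d \<le> d1 \<and> d1 \<le> 2 + d \<and> d2 \<le> d))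
       \<ge> 1 - 8 * \<epsilon> powr (2/7)"
    using four_union_bound[OF pos \<epsilon>1[unfolded \<epsilon>_def]] by (simp add: Let_def \<epsilon>_def)
qed

end
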